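(* Let $C=\langle t\rangle$ be the infinite cyclic group and $V$ a finite dimensional $\mathbb{Q}$-vector space. Let $\mathcal{M}=\mathbb{Q}[C]\otimes_{\mathbb{Q}} V$ (a free $\mathbb{Q}[C]$-module) and $\widehat{\mathcal{M}}_I=\mathbb{Q}\llbracket x\rrbracket\otimes_{\mathbb{Q}} V$, regarded as a module over the group $C\otimes\mathbb{Q}=\{t^\alpha\mid\alpha\in\mathbb{Q}\}$, where $t^\alpha$ acts by multiplication by $(1+x)^\alpha=\sum_{n\ge 0}\binom{\alpha}{n}x^n$. Then for every $n\ge 1$, \[H_1(C,\Lambda^n_{\mathbb{Q}}\mathcal{M})=0\qquad\text{and}\qquad H_1(C\otimes\mathbb{Q},\Lambda^n_{\mathbb{Q}}\widehat{\mathcal{M}}_I)=0,\] where the groups act diagonally on exterior powers.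
   Context: $\widehat{\mathcal{M}}_I$ is the $I$-adic completion of $\mathcal{M}$, where $I$ is the augmentation ideal of $\mathbb{Q}[C]$, and is identified with $\mathbb{Q}\llbracket x\rrbracket\otimes V$ via $t\mapsto 1+x$. Here $\binom{\alpha}{n}=\alpha(\alpha-1)\cdots(\alpha-n+1)/n!$. Group homology is with the indicated module coefficients. *)

theory Defs
  imports Complex_Main "HOL-Combinatorics.Permutations" "HOL-Library.Function_Algebras"
begin

text \<open>Chains are finitely supported: C_1 = finitely supported
maps G to A, C_2 = finitely supported maps G x G to A. Convention (Brown, left bar
resolution, left module A):
  d1([g] (x) m) = g^-1 m - m,
  d2([g|h] (x) m) = [h] (x) g^-1 m - [gh] (x) m + [g] (x) m.\<close>

definition bar_d1 :: "('g::ab_group_add \<Rightarrow> 'm::ab_group_add \<Rightarrow> 'm) \<Rightarrow> ('g \<Rightarrow> 'm) \<Rightarrow> 'm" where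
  "bar_d1 act c = (\<Sum>g\<in>{g. c g \<noteq> 0}. act (- g) (c g) - c g)"

definition bar_d2 :: "('g::ab_group_add \<Rightarrow> 'm::ab_group_add \<Rightarrow> 'm) \<Rightarrow> ('g \<times> 'g \<Rightarrow> 'm) \<Rightarrow> ('g \<Rightarrow> 'm)" where
  "bar_d2 act e = (\<lambda>k.
      (\<Sum>p\<in>{p. e p \<noteq> 0 \<and> snd p = k}. act (- fst p) (e p))
    - (\<Sum>p\<in>{p. e p \<noteq> 0 \<and> fst p + snd p = k}. e p)
    + (\<Sum>p\<in>{p. e p \<noteq> 0 \<and> fst p = k}. e p))"

definition H1_vanishes :: "('g::ab_group_add \<Rightarrow> 'm::ab_group_add \<Rightarrow> 'm) \<Rightarrow> 'm set \<Rightarrow> bool" where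
  "H1_vanishes act A \<longleftrightarrow>
     (\<forall>c. finite {g. c g \<noteq> 0} \<and> (\<forall>g. c g \<in> A) \<and> bar_d1 act c = 0 \<longrightarrow>
        (\<exists>e. finite {p. e p \<noteq> 0} \<and> (\<forall>p. e p \<in> A) \<and> bar_d2 act e = c))"

text \<open>Model: w_1 /\ ... /\ w_n is realised as the function
  (phi_1,...,phi_n) |-> det(phi_i(w_j))  on n-tuples of Q-linear functionals
(and 0 on non-linear tuples). Lambda^n W is the Q-span of these; this is
isomorphic to the usual exterior power (the canonical map is injective).\<close>

definition linfun :: "(('a \<Rightarrow> rat) \<Rightarrow> rat) \<Rightarrow> bool" where
  "linfun \<phi> \<longleftrightarrow> (\<forall>u v. \<phi> (\<lambda>a. u a + v a) = \<phi> u + \<phi> v) \<and> (\<forall>q u. \<phi> (\<lambda>a. q * u a) = q * \<phi> u)"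

definition wedge :: "nat \<Rightarrow> (nat \<Rightarrow> ('a \<Rightarrow> rat)) \<Rightarrow> (nat \<Rightarrow> (('a \<Rightarrow> rat) \<Rightarrow> rat)) \<Rightarrow> rat" where
  "wedge n w \<Phi> = (if \<forall>i<n. linfun (\<Phi> i)
      then (\<Sum>p | p permutes {..<n}. of_int (sign p) * (\<Prod>i<n. \<Phi> i (w (p i))))
      else 0)"

definition ext_pow :: "nat \<Rightarrow> ('a \<Rightarrow> rat) set \<Rightarrow> ((nat \<Rightarrow> (('a \<Rightarrow> rat) \<Rightarrow> rat)) \<Rightarrow> rat) set" where
  "ext_pow n W = {F. \<exists>k (c :: nat \<Rightarrow> rat) ws. (\<forall>i<k. \<forall>j<n. ws i j \<in> W) \<and>
                      F = (\<lambda>\<Phi>. \<Sum>i<k. c i * wedge n (ws i) \<Phi>)}"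

text \<open>Diagonal action induced by a linear map g: it sends the wedge of w_1..w_n to
the wedge of g w_1 .. g w_n.\<close>
definition ext_act :: "nat \<Rightarrow> (('a \<Rightarrow> rat) \<Rightarrow> ('a \<Rightarrow> rat)) \<Rightarrow>
     ((nat \<Rightarrow> (('a \<Rightarrow> rat) \<Rightarrow> rat)) \<Rightarrow> rat) \<Rightarrow> ((nat \<Rightarrow> (('a \<Rightarrow> rat) \<Rightarrow> rat)) \<Rightarrow> rat)" where
  "ext_act n g F = (\<lambda>\<Phi>. if \<forall>i<n. linfun (\<Phi> i) then F (\<lambda>i. \<Phi> i \<circ> g) else 0)"

text \<open>V = Q^d with basis e_0..e_{d-1}. M = Q[C] (x) V: an element is the finitely
supported coefficient function (i,m) |-> coefficient of t^m e_i.\<close>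
definition Mfree :: "nat \<Rightarrow> (nat \<times> int \<Rightarrow> rat) set" where
  "Mfree d = {w. finite {a. w a \<noteq> 0} \<and> (\<forall>i m. d \<le> i \<longrightarrow> w (i, m) = 0)}"

definition shiftM :: "int \<Rightarrow> (nat \<times> int \<Rightarrow> rat) \<Rightarrow> (nat \<times> int \<Rightarrow> rat)" where
  "shiftM k w = (\<lambda>(i, m). w (i, m - k))"

text \<open>M^_I = Q[[x]] (x) V: an element is (i,m) |-> coefficient of x^m e_i.\<close>
definition Mhat :: "nat \<Rightarrow> (nat \<times> nat \<Rightarrow> rat) set" where
  "Mhat d = {w. \<forall>i m. d \<le> i \<longrightarrow> w (i, m) = 0}"

definition powM :: "rat \<Rightarrow> (nat \<times> nat \<Rightarrow> rat) \<Rightarrow> (nat \<times> nat \<Rightarrow> rat)" where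
  "powM \<alpha> w = (\<lambda>(i, m). \<Sum>j\<le>m. (\<alpha> gchoose j) * w (i, m - j))"

end

theory Submission
  imports Defs "HOL-Computational_Algebra.Formal_Power_Series"
begin

text \<open>
  For an abelian group acting on A, a 1-cycle of the bar complex supported in the cyclic subgroup
  generated by g is homologous to a single chain [g] M, and being a cycle then means g^-1 M = M.
  Hence H_1 vanishes as soon as every finite subset of the group lies in a cyclic subgroup whose
  generator has no nonzero fixed points; this covers \<int> and, via common denominators, \<rat>.

  An element F of the exterior power is determined, by multilinearity, by its coefficients
  F (eval_at \<circ> a) on tuples of coordinate functionals. If F is fixed by t^-1, its coefficients are
  invariant under translating all exponents, and finite support forces them to vanish. If F is fixed
  by (1 + x)^\<beta> with \<beta> \<noteq> 0, let D be the lowest total degree of a nonzero coefficient: in degree D + 1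
  only the terms 1 and \<beta>x of (1 + x)^\<beta> contribute, which gives a linear relation among coefficients
  of degree D. It fails for the tuple obtained by raising, by one, the first exponent of a nonzero
  degree-D coefficient whose first exponent is maximal.
\<close>

section \<open>Vanishing of H_1 for locally cyclic groups\<close>

definition single_chain :: "'x \<Rightarrow> 'm::zero \<Rightarrow> 'x \<Rightarrow> 'm" where
  "single_chain x m = (\<lambda>y. if y = x then m else 0)"

definition fin_supp :: "('x \<Rightarrow> 'm::zero) \<Rightarrow> bool" where
  "fin_supp c \<longleftrightarrow> finite {x. c x \<noteq> 0}"

lemma single_chain_0 [simp]: "single_chain x 0 = 0"
  by (simp add: single_chain_def fun_eq_iff)

lemma single_chain_add: "single_chain x (m + m') = single_chain x m + single_chain x (m' :: 'm::monoid_add)"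
  by (simp add: single_chain_def fun_eq_iff)

lemma single_chain_diff: "single_chain x (m - m') = single_chain x m - single_chain x (m' :: 'm::group_add)"
  by (simp add: single_chain_def fun_eq_iff)

lemma fin_supp_0 [simp]: "fin_supp 0"
  by (simp add: fin_supp_def)

lemma fin_supp_single_chain [simp]: "fin_supp (single_chain x m)"
  unfolding fin_supp_def single_chain_def by (rule finite_subset[of _ "{x}"]) auto

lemma fin_supp_add [simp]:
  "fin_supp c \<Longrightarrow> fin_supp c' \<Longrightarrow> fin_supp (c + (c' :: 'x \<Rightarrow> 'm::monoid_add))"
  unfolding fin_supp_def by (rule finite_subset[of _ "{x. c x \<noteq> 0} \<union> {x. c' x \<noteq> 0}"]) auto

lemma fin_supp_diff [simp]:
  "fin_supp c \<Longrightarrow> fin_supp c' \<Longrightarrow> fin_supp (c - (c' :: 'x \<Rightarrow> 'm::group_add))"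
  unfolding fin_supp_def by (rule finite_subset[of _ "{x. c x \<noteq> 0} \<union> {x. c' x \<noteq> 0}"]) auto

lemma sum_fun_apply: "(\<Sum>i\<in>S. f i) x = (\<Sum>i\<in>S. f i x)"
  by (induction S rule: infinite_finite_induct) auto

lemma sum_single_chain:
  assumes "fin_supp c"
  shows "(\<Sum>x | c x \<noteq> 0. single_chain x (c x)) = c"
proof
  fix y
  show "(\<Sum>x | c x \<noteq> 0. single_chain x (c x)) y = c y"
    using assms by (simp add: sum_fun_apply single_chain_def fin_supp_def)
qed

lemma sum_additive_on:
  assumes "P 0" "\<And>x y. P x \<Longrightarrow> P y \<Longrightarrow> P (x + y)"
    and "D 0 = 0" "\<And>x y. P x \<Longrightarrow> P y \<Longrightarrow> D (x + y) = D x + D y"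
    and "\<And>i. i \<in> S \<Longrightarrow> P (c i)"
  shows "D (\<Sum>i\<in>S. c i) = (\<Sum>i\<in>S. D (c i))"
proof -
  have "P (\<Sum>i\<in>S. c i) \<and> D (\<Sum>i\<in>S. c i) = (\<Sum>i\<in>S. D (c i))"
    using assms(5) by (induction S rule: infinite_finite_induct) (auto simp: assms(1-4))
  then show ?thesis ..
qed

locale module_action =
  fixes act :: "'g::ab_group_add \<Rightarrow> 'm::ab_group_add \<Rightarrow> 'm" and A :: "'m set"
  assumes zero_mem: "0 \<in> A"
    and add_mem: "x \<in> A \<Longrightarrow> y \<in> A \<Longrightarrow> x + y \<in> A"
    and uminus_mem: "x \<in> A \<Longrightarrow> - x \<in> A"
    and act_mem: "x \<in> A \<Longrightarrow> act g x \<in> A"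
    and act_add: "act g (x + y) = act g x + act g y"
    and act_act: "x \<in> A \<Longrightarrow> act g (act h x) = act (g + h) x"
begin

lemma act_0 [simp]: "act g 0 = 0"
  using act_add[of g 0 0] by simp

lemma diff_mem: "x \<in> A \<Longrightarrow> y \<in> A \<Longrightarrow> x - y \<in> A"
  by (metis add_mem uminus_mem diff_conv_add_uminus)

lemma bar_d1_eq_sum:
  assumes "finite S" "\<And>g. g \<notin> S \<Longrightarrow> c g = 0"
  shows "bar_d1 act c = (\<Sum>g\<in>S. act (- g) (c g) - c g)"
  unfolding bar_d1_def by (rule sum.mono_neutral_left) (use assms in auto)

lemma bar_d2_eq_sum:
  assumes "finite S" "\<And>p. p \<notin> S \<Longrightarrow> e p = 0"
  shows "bar_d2 act e k = (\<Sum>p | p \<in> S \<and> snd p = k. act (- fst p) (e p))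
      - (\<Sum>p | p \<in> S \<and> fst p + snd p = k. e p) + (\<Sum>p | p \<in> S \<and> fst p = k. e p)"
proof -
  have restrict: "(\<Sum>p | e p \<noteq> 0 \<and> Q p. f p) = (\<Sum>p | p \<in> S \<and> Q p. f p)"
    if "\<And>p. e p = 0 \<Longrightarrow> f p = 0" for Q and f :: "'g \<times> 'g \<Rightarrow> 'm"
    by (rule sum.mono_neutral_left) (use assms that in auto)
  show ?thesis
    unfolding bar_d2_def by (simp add: restrict)
qed

lemma bar_d1_0 [simp]: "bar_d1 act 0 = 0"
  by (simp add: bar_d1_def)

lemma bar_d2_0 [simp]: "bar_d2 act 0 = 0"
  by (simp add: bar_d2_def fun_eq_iff)

lemma bar_d1_add:
  assumes "fin_supp c" "fin_supp c'"
  shows "bar_d1 act (c + c') = bar_d1 act c + bar_d1 act c'"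
proof -
  let ?S = "{g. c g \<noteq> 0} \<union> {g. c' g \<noteq> 0}"
  have "finite ?S"
    using assms by (simp add: fin_supp_def)
  then have d1: "bar_d1 act x = (\<Sum>g\<in>?S. act (- g) (x g) - x g)" if "x \<in> {c, c', c + c'}" for x
    by (rule bar_d1_eq_sum) (use that in auto)
  show ?thesis
    by (simp add: d1 act_add sum.distrib[symmetric] algebra_simps)
qed

lemma bar_d1_diff:
  assumes "fin_supp c" "fin_supp c'"
  shows "bar_d1 act (c - c') = bar_d1 act c - bar_d1 act c'"
proof -
  have "bar_d1 act c = bar_d1 act ((c - c') + c')"
    by simp
  also have "\<dots> = bar_d1 act (c - c') + bar_d1 act c'"
    by (rule bar_d1_add) (simp_all add: assms)
  finally show ?thesis
    by simp
qed

lemma bar_d2_add: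
  assumes "fin_supp e" "fin_supp e'"
  shows "bar_d2 act (e + e') = bar_d2 act e + bar_d2 act e'"
proof
  fix k
  let ?S = "{p. e p \<noteq> 0} \<union> {p. e' p \<noteq> 0}"
  have "finite ?S"
    using assms by (simp add: fin_supp_def)
  then have d2: "bar_d2 act x k = (\<Sum>p | p \<in> ?S \<and> snd p = k. act (- fst p) (x p))
      - (\<Sum>p | p \<in> ?S \<and> fst p + snd p = k. x p) + (\<Sum>p | p \<in> ?S \<and> fst p = k. x p)"
    if "x \<in> {e, e', e + e'}" for x
    by (rule bar_d2_eq_sum) (use that in auto)
  show "bar_d2 act (e + e') k = (bar_d2 act e + bar_d2 act e') k"
    by (simp add: d2 act_add sum.distrib)
qed

lemma bar_d2_diff:
  assumes "fin_supp e" "fin_supp e'"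
  shows "bar_d2 act (e - e') = bar_d2 act e - bar_d2 act e'"
proof -
  have "bar_d2 act e = bar_d2 act ((e - e') + e')"
    by simp
  also have "\<dots> = bar_d2 act (e - e') + bar_d2 act e'"
    by (rule bar_d2_add) (simp_all add: assms)
  finally show ?thesis
    by simp
qed

lemma bar_d1_single: "bar_d1 act (single_chain g m) = act (- g) m - m"
  by (subst bar_d1_eq_sum[of "{g}"]) (auto simp: single_chain_def)

lemma bar_d2_single:
  "bar_d2 act (single_chain (g, h) m) = single_chain h (act (- g) m) - single_chain (g + h) m + single_chain g m"
proof
  fix k
  have singleton: "{p. p = (g, h) \<and> Q p} = (if Q (g, h) then {(g, h)} else {})" for Q
    by auto
  show "bar_d2 act (single_chain (g, h) m) k
      = (single_chain h (act (- g) m) - single_chain (g + h) m + single_chain g m) k"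
    by (subst bar_d2_eq_sum[of "{(g, h)}"]) (simp_all add: singleton single_chain_def)
qed

lemma bar_d1_sum:
  "(\<And>i. i \<in> S \<Longrightarrow> fin_supp (c i)) \<Longrightarrow> bar_d1 act (\<Sum>i\<in>S. c i) = (\<Sum>i\<in>S. bar_d1 act (c i))"
  by (rule sum_additive_on[where P = fin_supp and D = "bar_d1 act"]) (simp_all add: bar_d1_add)

lemma bar_d2_sum:
  "(\<And>i. i \<in> S \<Longrightarrow> fin_supp (e i)) \<Longrightarrow> bar_d2 act (\<Sum>i\<in>S. e i) = (\<Sum>i\<in>S. bar_d2 act (e i))"
  by (rule sum_additive_on[where P = fin_supp and D = "bar_d2 act"]) (simp_all add: bar_d2_add)

lemma bar_d1_bar_d2:
  assumes "fin_supp e" "\<And>p. e p \<in> A"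
  shows "bar_d1 act (bar_d2 act e) = 0"
proof -
  have d1_d2_single: "bar_d1 act (bar_d2 act (single_chain p m)) = 0" if "m \<in> A" for p m
  proof (cases p)
    case (Pair g h)
    have "act (- h) (act (- g) m) = act (- (g + h)) m"
      using act_act[OF that] by (simp add: add.commute)
    then show ?thesis
      using Pair by (simp add: bar_d2_single bar_d1_add bar_d1_diff bar_d1_single)
  qed
  have fin_d2_single: "fin_supp (bar_d2 act (single_chain p m))" for p m
    by (cases p) (simp add: bar_d2_single)
  have "bar_d2 act e = bar_d2 act (\<Sum>p | e p \<noteq> 0. single_chain p (e p))"
    using assms(1) by (simp add: sum_single_chain)
  also have "\<dots> = (\<Sum>p | e p \<noteq> 0. bar_d2 act (single_chain p (e p)))"
    by (rule bar_d2_sum) simp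
  finally show ?thesis
    using assms(2) by (simp add: bar_d1_sum fin_d2_single d1_d2_single)
qed

definition boundaries :: "('g \<Rightarrow> 'm) set" where
  "boundaries = {bar_d2 act e | e. fin_supp e \<and> (\<forall>p. e p \<in> A)}"

lemma boundariesE:
  assumes "c \<in> boundaries"
  obtains e where "fin_supp e" "\<And>p. e p \<in> A" "c = bar_d2 act e"
  using assms unfolding boundaries_def by blast

lemma boundariesI: "fin_supp e \<Longrightarrow> (\<And>p. e p \<in> A) \<Longrightarrow> bar_d2 act e \<in> boundaries"
  unfolding boundaries_def by blast

lemma zero_in_boundaries: "0 \<in> boundaries"
  using boundariesI[of 0] by (simp add: zero_mem)

lemma boundaries_add:
  assumes "c \<in> boundaries" "c' \<in> boundaries"
  shows "c + c' \<in> boundaries"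
proof -
  obtain e e' where "fin_supp e" "\<And>p. e p \<in> A" "c = bar_d2 act e"
    and "fin_supp e'" "\<And>p. e' p \<in> A" "c' = bar_d2 act e'"
    using assms by (meson boundariesE)
  then show ?thesis
    using boundariesI[of "e + e'"] by (simp add: bar_d2_add add_mem)
qed

lemma boundaries_diff:
  assumes "c \<in> boundaries" "c' \<in> boundaries"
  shows "c - c' \<in> boundaries"
proof -
  obtain e e' where "fin_supp e" "\<And>p. e p \<in> A" "c = bar_d2 act e"
    and "fin_supp e'" "\<And>p. e' p \<in> A" "c' = bar_d2 act e'"
    using assms by (meson boundariesE)
  then show ?thesis
    using boundariesI[of "e - e'"] by (simp add: bar_d2_diff diff_mem)
qed

lemma bar_d2_single_in_boundaries: "m \<in> A \<Longrightarrow> bar_d2 act (single_chain p m) \<in> boundaries"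
  by (rule boundariesI) (simp, simp add: single_chain_def zero_mem)

lemma bar_d1_boundary: "c \<in> boundaries \<Longrightarrow> bar_d1 act c = 0"
  by (metis boundariesE bar_d1_bar_d2)

text \<open>Each step subtracts or adds the boundary
  d_2[\<iota> i | \<iota> 1] m = [\<iota> 1] (\<iota> i)^-1m - [\<iota> i + \<iota> 1] m + [\<iota> i] m.\<close>

lemma single_chain_homologous_to_generator:
  fixes \<iota> :: "int \<Rightarrow> 'g"
  assumes hom: "\<And>a b. \<iota> (a + b) = \<iota> a + \<iota> b" and "m \<in> A"
  shows "\<exists>M\<in>A. single_chain (\<iota> k) m - single_chain (\<iota> 1) M \<in> boundaries"
  using assms(2)
proof (induction k arbitrary: m rule: int_induct[where k = 1])
  case base
  show ?case
    by (intro bexI[of _ m]) (simp only: diff_self zero_in_boundaries, fact base)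
next
  case (step1 i)
  then obtain M where "M \<in> A" and hom_i: "single_chain (\<iota> i) m - single_chain (\<iota> 1) M \<in> boundaries"
    by blast
  have "single_chain (\<iota> (i + 1)) m - single_chain (\<iota> 1) (M + act (- \<iota> i) m)
      = single_chain (\<iota> i) m - single_chain (\<iota> 1) M - bar_d2 act (single_chain (\<iota> i, \<iota> 1) m)"
    by (simp add: bar_d2_single hom single_chain_add algebra_simps)
  also have "\<dots> \<in> boundaries"
    by (intro boundaries_diff hom_i bar_d2_single_in_boundaries step1.prems)
  finally show ?case
    using \<open>M \<in> A\<close> step1.prems by (metis add_mem act_mem)
next
  case (step2 i)
  then obtain M where "M \<in> A" and hom_i: "single_chain (\<iota> i) m - single_chain (\<iota> 1) M \<in> boundaries"
    by blast
  have "\<iota> (i - 1) + \<iota> 1 = \<iota> i"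
    by (metis hom diff_add_cancel)
  then have "single_chain (\<iota> (i - 1)) m - single_chain (\<iota> 1) (M - act (- \<iota> (i - 1)) m)
      = bar_d2 act (single_chain (\<iota> (i - 1), \<iota> 1) m) + (single_chain (\<iota> i) m - single_chain (\<iota> 1) M)"
    by (simp add: bar_d2_single single_chain_diff algebra_simps)
  also have "\<dots> \<in> boundaries"
    by (intro boundaries_add hom_i bar_d2_single_in_boundaries step2.prems)
  finally show ?case
    using \<open>M \<in> A\<close> step2.prems by (metis diff_mem act_mem)
qed

lemma chain_homologous_to_generator:
  fixes \<iota> :: "int \<Rightarrow> 'g"
  assumes hom: "\<And>a b. \<iota> (a + b) = \<iota> a + \<iota> b"
    and c: "fin_supp c" "\<And>g. c g \<in> A" "{g. c g \<noteq> 0} \<subseteq> range \<iota>"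
  shows "\<exists>M\<in>A. c - single_chain (\<iota> 1) M \<in> boundaries"
proof -
  have "\<exists>M\<in>A. (\<Sum>g\<in>S. single_chain g (c g)) - single_chain (\<iota> 1) M \<in> boundaries"
    if "finite S" "S \<subseteq> range \<iota>" for S
    using that
  proof (induction S rule: finite_induct)
    case empty
    show ?case
      by (intro bexI[of _ 0])
        (simp only: sum.empty single_chain_0 diff_self zero_in_boundaries, fact zero_mem)
  next
    case (insert x S)
    then obtain k where "x = \<iota> k"
      by blast
    then obtain M1 where "M1 \<in> A" and hom_x: "single_chain x (c x) - single_chain (\<iota> 1) M1 \<in> boundaries"
      using single_chain_homologous_to_generator[OF hom c(2)[of x], of k] by blast
    obtain M2 where "M2 \<in> A"
      and hom_S: "(\<Sum>g\<in>S. single_chain g (c g)) - single_chain (\<iota> 1) M2 \<in> boundaries"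
      using insert by blast
    have "(single_chain x (c x) - single_chain (\<iota> 1) M1)
        + ((\<Sum>g\<in>S. single_chain g (c g)) - single_chain (\<iota> 1) M2)
        = (\<Sum>g\<in>insert x S. single_chain g (c g)) - single_chain (\<iota> 1) (M1 + M2)"
      using insert.hyps by (simp add: single_chain_add)
    then show ?case
      using boundaries_add[OF hom_x hom_S] add_mem[OF \<open>M1 \<in> A\<close> \<open>M2 \<in> A\<close>] by metis
  qed
  from this[of "{g. c g \<noteq> 0}"] show ?thesis
    using c by (simp add: sum_single_chain fin_supp_def)
qed

lemma cycle_in_cyclic_subgroup_is_boundary:
  fixes \<iota> :: "int \<Rightarrow> 'g"
  assumes hom: "\<And>a b. \<iota> (a + b) = \<iota> a + \<iota> b"
    and no_fix: "\<And>M. M \<in> A \<Longrightarrow> act (- \<iota> 1) M = M \<Longrightarrow> M = 0"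
    and c: "fin_supp c" "\<And>g. c g \<in> A" "{g. c g \<noteq> 0} \<subseteq> range \<iota>"
    and cycle: "bar_d1 act c = 0"
  shows "c \<in> boundaries"
proof -
  obtain M where "M \<in> A" and hom_c: "c - single_chain (\<iota> 1) M \<in> boundaries"
    using chain_homologous_to_generator[OF hom c] by blast
  have "act (- \<iota> 1) M - M = 0"
    using bar_d1_boundary[OF hom_c] cycle c(1) by (simp add: bar_d1_diff bar_d1_single)
  then have "M = 0"
    using no_fix \<open>M \<in> A\<close> by simp
  then show ?thesis
    using hom_c by simp
qed

lemma H1_vanishes_if_locally_cyclic:
  assumes "\<And>S. finite S \<Longrightarrow> \<exists>\<iota> :: int \<Rightarrow> 'g. (\<forall>a b. \<iota> (a + b) = \<iota> a + \<iota> b)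
              \<and> S \<subseteq> range \<iota> \<and> (\<forall>M\<in>A. act (- \<iota> 1) M = M \<longrightarrow> M = 0)"
  shows "H1_vanishes act A"
  unfolding H1_vanishes_def
proof (intro allI impI, elim conjE)
  fix c
  assume c: "finite {g. c g \<noteq> 0}" "\<forall>g. c g \<in> A" "bar_d1 act c = 0"
  obtain \<iota> :: "int \<Rightarrow> 'g" where "\<forall>a b. \<iota> (a + b) = \<iota> a + \<iota> b"
      "{g. c g \<noteq> 0} \<subseteq> range \<iota>" "\<forall>M\<in>A. act (- \<iota> 1) M = M \<longrightarrow> M = 0"
    using assms[OF c(1)] by blast
  then have "c \<in> boundaries"
    using c by (intro cycle_in_cyclic_subgroup_is_boundary) (auto simp: fin_supp_def)
  then show "\<exists>e. finite {p. e p \<noteq> 0} \<and> (\<forall>p. e p \<in> A) \<and> bar_d2 act e = c"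
    by (auto simp: fin_supp_def elim!: boundariesE)
qed

end

lemma finite_rat_set_common_denominator:
  "finite (S :: rat set) \<Longrightarrow> \<exists>N::int. N > 0 \<and> (\<forall>q\<in>S. \<exists>k::int. q = of_int k / of_int N)"
proof (induction S rule: finite_induct)
  case empty
  show ?case
    by (intro exI[of _ 1]) simp
next
  case (insert q S)
  then obtain N :: int where N: "N > 0" "\<forall>p\<in>S. \<exists>k::int. p = of_int k / of_int N"
    by blast
  obtain a b where ab: "quotient_of q = (a, b)"
    by (cases "quotient_of q")
  have "b > 0"
    using quotient_of_denom_pos[OF ab] .
  have "q = of_int (a * N) / of_int (b * N)"
    using quotient_of_div[OF ab] N(1) by simp
  moreover have "\<exists>k::int. p = of_int k / of_int (b * N)" if p: "p \<in> S" for p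
  proof -
    obtain k :: int where "p = of_int k / of_int N"
      using N(2) p by blast
    then have "p = of_int (k * b) / of_int (b * N)"
      using \<open>b > 0\<close> by simp
    then show ?thesis ..
  qed
  ultimately have "\<forall>p\<in>insert q S. \<exists>k::int. p = of_int k / of_int (b * N)"
    by blast
  moreover have "b * N > 0"
    using N(1) \<open>b > 0\<close> by simp
  ultimately show ?case
    by blast
qed

lemma H1_vanishes_int_action:
  fixes act :: "int \<Rightarrow> 'm::ab_group_add \<Rightarrow> 'm"
  assumes "module_action act A" and "\<And>M. M \<in> A \<Longrightarrow> act (- 1) M = M \<Longrightarrow> M = 0"
  shows "H1_vanishes act A"
  by (rule module_action.H1_vanishes_if_locally_cyclic[OF assms(1)])
    (use assms(2) in \<open>auto intro!: exI[of _ id]\<close>)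

lemma H1_vanishes_rat_action:
  fixes act :: "rat \<Rightarrow> 'm::ab_group_add \<Rightarrow> 'm"
  assumes "module_action act A"
    and "\<And>\<beta> M. \<beta> \<noteq> 0 \<Longrightarrow> M \<in> A \<Longrightarrow> act \<beta> M = M \<Longrightarrow> M = 0"
  shows "H1_vanishes act A"
proof (rule module_action.H1_vanishes_if_locally_cyclic[OF assms(1)])
  fix S :: "rat set"
  assume "finite S"
  then obtain N :: int where N: "N > 0" "\<forall>q\<in>S. \<exists>k::int. q = of_int k / of_int N"
    using finite_rat_set_common_denominator by blast
  let ?\<iota> = "\<lambda>k::int. of_int k / of_int N :: rat"
  have hom: "\<forall>a b. ?\<iota> (a + b) = ?\<iota> a + ?\<iota> b"
    by (simp add: add_divide_distrib)
  have range: "S \<subseteq> range ?\<iota>"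
  proof
    fix q
    assume "q \<in> S"
    then obtain k where "q = ?\<iota> k"
      using N(2) by blast
    then show "q \<in> range ?\<iota>"
      by (rule range_eqI)
  qed
  have "- ?\<iota> 1 \<noteq> 0"
    using N(1) by simp
  then have no_fix: "\<forall>M\<in>A. act (- ?\<iota> 1) M = M \<longrightarrow> M = 0"
    using assms(2) by blast
  show "\<exists>\<iota> :: int \<Rightarrow> rat. (\<forall>a b. \<iota> (a + b) = \<iota> a + \<iota> b)
      \<and> S \<subseteq> range \<iota> \<and> (\<forall>M\<in>A. act (- \<iota> 1) M = M \<longrightarrow> M = 0)"
    by (rule exI[of _ ?\<iota>]) (intro conjI hom range no_fix)
qed

section \<open>Exterior powers\<close>

definition eval_at :: "'a \<Rightarrow> ('a \<Rightarrow> rat) \<Rightarrow> rat" where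
  "eval_at a w = w a"

lemma eval_at_apply: "eval_at a w = w a"
  by (simp add: eval_at_def)

definition linmap :: "(('a \<Rightarrow> rat) \<Rightarrow> ('b \<Rightarrow> rat)) \<Rightarrow> bool" where
  "linmap g \<longleftrightarrow> (\<forall>u v. g (\<lambda>a. u a + v a) = (\<lambda>b. g u b + g v b))
                 \<and> (\<forall>q u. g (\<lambda>a. q * u a) = (\<lambda>b. q * g u b))"

lemma linfun_add: "linfun \<phi> \<Longrightarrow> \<phi> (\<lambda>a. u a + v a) = \<phi> u + \<phi> v"
  unfolding linfun_def by blast

lemma linfun_mult: "linfun \<phi> \<Longrightarrow> \<phi> (\<lambda>a. q * u a) = q * \<phi> u"
  unfolding linfun_def by blast

lemma linfun_zero: "linfun \<phi> \<Longrightarrow> \<phi> (\<lambda>a. 0) = 0"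
  using linfun_mult[of \<phi> 0 "\<lambda>a. 0"] by simp

lemma linfun_sum:
  assumes "linfun \<phi>"
  shows "\<phi> (\<lambda>a. \<Sum>s\<in>S. r s * u s a) = (\<Sum>s\<in>S. r s * \<phi> (u s))"
  by (induction S rule: infinite_finite_induct)
    (simp_all add: linfun_zero[OF assms] linfun_add[OF assms] linfun_mult[OF assms])

lemma linfun_eval_at: "linfun (eval_at a)"
  by (simp add: linfun_def eval_at_apply)

lemma linfun_comp_linmap: "linfun \<phi> \<Longrightarrow> linmap g \<Longrightarrow> linfun (\<phi> \<circ> g)"
  by (simp add: linfun_def linmap_def)

lemma ext_powE:
  assumes "F \<in> ext_pow n W"
  obtains k :: nat and c :: "nat \<Rightarrow> rat" and ws
  where "\<forall>i<k. \<forall>j<n. ws i j \<in> W" "F = (\<lambda>\<Phi>. \<Sum>i<k. c i * wedge n (ws i) \<Phi>)"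
  using assms unfolding ext_pow_def by blast

lemma ext_powI:
  fixes k :: nat and c :: "nat \<Rightarrow> rat"
  assumes "\<forall>i<k. \<forall>j<n. ws i j \<in> W"
  shows "(\<lambda>\<Phi>. \<Sum>i<k. c i * wedge n (ws i) \<Phi>) \<in> ext_pow n W"
  using assms unfolding ext_pow_def by blast

lemma ext_pow_0: "0 \<in> ext_pow n W"
  using ext_powI[where k = 0 and c = "\<lambda>_. 0" and ws = "\<lambda>_ _. undefined" and n = n and W = W]
  by (simp add: zero_fun_def)

lemma sum_lessThan_add: "(\<Sum>i<k + l. f i) = (\<Sum>i<k. f i) + (\<Sum>i<l. f (k + i))" for l :: nat
  by (induction l) (simp_all add: add.assoc)

lemma ext_pow_add:
  assumes "F \<in> ext_pow n W" "G \<in> ext_pow n W"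
  shows "F + G \<in> ext_pow n W"
proof -
  obtain k :: nat and c ws where ws: "\<forall>i<k. \<forall>j<n. ws i j \<in> W"
    and F: "F = (\<lambda>\<Phi>. \<Sum>i<k. c i * wedge n (ws i) \<Phi>)"
    using assms(1) by (rule ext_powE)
  obtain l :: nat and d vs where vs: "\<forall>i<l. \<forall>j<n. vs i j \<in> W"
    and G: "G = (\<lambda>\<Phi>. \<Sum>i<l. d i * wedge n (vs i) \<Phi>)"
    using assms(2) by (rule ext_powE)
  define e where "e i = (if i < k then c i else d (i - k))" for i
  define us where "us i = (if i < k then ws i else vs (i - k))" for i
  have "\<forall>i<k + l. \<forall>j<n. us i j \<in> W"
    using ws vs by (simp add: us_def)
  moreover have "F + G = (\<lambda>\<Phi>. \<Sum>i<k + l. e i * wedge n (us i) \<Phi>)"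
    by (simp add: fun_eq_iff F G sum_lessThan_add e_def us_def)
  ultimately show ?thesis
    by (simp add: ext_powI)
qed

lemma ext_pow_uminus:
  assumes "F \<in> ext_pow n W"
  shows "- F \<in> ext_pow n W"
proof -
  obtain k :: nat and c ws where ws: "\<forall>i<k. \<forall>j<n. ws i j \<in> W"
    and F: "F = (\<lambda>\<Phi>. \<Sum>i<k. c i * wedge n (ws i) \<Phi>)"
    using assms by (rule ext_powE)
  have "- F = (\<lambda>\<Phi>. \<Sum>i<k. (- c i) * wedge n (ws i) \<Phi>)"
    by (simp add: fun_eq_iff F sum_negf[symmetric])
  moreover have "(\<lambda>\<Phi>. \<Sum>i<k. (- c i) * wedge n (ws i) \<Phi>) \<in> ext_pow n W"
    by (rule ext_powI[OF ws])
  ultimately show ?thesis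
    by (simp only:)
qed

lemma wedge_not_linfun: "\<not> (\<forall>i<n. linfun (\<Phi> i)) \<Longrightarrow> wedge n w \<Phi> = 0"
  unfolding wedge_def by (rule if_not_P)

lemma ext_pow_not_linfun: "F \<in> ext_pow n W \<Longrightarrow> \<not> (\<forall>i<n. linfun (\<Phi> i)) \<Longrightarrow> F \<Phi> = 0"
  by (erule ext_powE) (simp add: wedge_not_linfun)

lemma ext_pow_cong:
  assumes "F \<in> ext_pow n W" "\<And>i. i < n \<Longrightarrow> \<Phi> i = \<Phi>' i"
  shows "F \<Phi> = F \<Phi>'"
proof -
  have "(\<forall>i<n. linfun (\<Phi> i)) = (\<forall>i<n. linfun (\<Phi>' i))"
    using assms(2) by simp
  moreover have "(\<Prod>i<n. \<Phi> i (w (p i))) = (\<Prod>i<n. \<Phi>' i (w (p i)))" for w and p :: "nat \<Rightarrow> nat"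
    using assms(2) by (intro prod.cong) simp_all
  ultimately have "wedge n w \<Phi> = wedge n w \<Phi>'" for w
    unfolding wedge_def by presburger
  then show ?thesis
    using assms(1) by (elim ext_powE) simp
qed

lemma wedge_comp_linmap:
  assumes "linmap g" "\<forall>i<n. linfun (\<Phi> i)"
  shows "wedge n w (\<lambda>i. \<Phi> i \<circ> g) = wedge n (g \<circ> w) \<Phi>"
  using assms by (simp add: wedge_def linfun_comp_linmap)

lemma ext_act_mem:
  assumes "linmap g" "g ` W \<subseteq> W" "F \<in> ext_pow n W"
  shows "ext_act n g F \<in> ext_pow n W"
proof -
  obtain k :: nat and c ws where ws: "\<forall>i<k. \<forall>j<n. ws i j \<in> W"
    and F: "F = (\<lambda>\<Phi>. \<Sum>i<k. c i * wedge n (ws i) \<Phi>)"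
    using assms(3) by (rule ext_powE)
  have "ext_act n g F = (\<lambda>\<Phi>. \<Sum>i<k. c i * wedge n (g \<circ> ws i) \<Phi>)"
  proof (rule ext)
    fix \<Phi>
    show "ext_act n g F \<Phi> = (\<Sum>i<k. c i * wedge n (g \<circ> ws i) \<Phi>)"
    proof (cases "\<forall>i<n. linfun (\<Phi> i)")
      case True
      then show ?thesis
        by (simp add: ext_act_def F wedge_comp_linmap[OF assms(1)])
    next
      case False
      then show ?thesis
        unfolding ext_act_def if_not_P[OF False] wedge_not_linfun[OF False] by simp
    qed
  qed
  moreover have "\<forall>i<k. \<forall>j<n. (g \<circ> ws i) j \<in> W"
    using ws assms(2) by auto
  ultimately show ?thesis
    by (simp add: ext_powI)
qed

lemma ext_act_add: "ext_act n g (F + G) = ext_act n g F + ext_act n g G"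
  by (auto simp: ext_act_def fun_eq_iff)

lemma ext_act_comp: "linmap g \<Longrightarrow> ext_act n g (ext_act n h F) = ext_act n (g \<circ> h) F"
  by (auto simp: ext_act_def fun_eq_iff linfun_comp_linmap comp_assoc)

lemma ext_act_eval_at: "ext_act n g F (eval_at \<circ> a) = F (\<lambda>i. eval_at (a i) \<circ> g)"
  by (simp add: ext_act_def linfun_eval_at)

lemma module_action_ext_act:
  assumes "\<And>k. linmap (g k)" "\<And>k. g k ` W \<subseteq> W" "\<And>k l. g k \<circ> g l = g (k + l)"
  shows "module_action (\<lambda>k. ext_act n (g k)) (ext_pow n W)"
  by unfold_locales (simp_all add: assms ext_pow_0 ext_pow_add ext_pow_uminus ext_act_mem ext_act_add ext_act_comp)

lemma wedge_linear_in_slot: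
  assumes "k < n" "\<forall>i<n. i \<noteq> k \<longrightarrow> linfun (\<Phi> i)"
  obtains u where "\<And>\<Psi>. linfun \<Psi> \<Longrightarrow> wedge n w (\<Phi>(k := \<Psi>)) = \<Psi> u"
proof -
  let ?coef = "\<lambda>p. of_int (sign p) * (\<Prod>i\<in>{..<n} - {k}. \<Phi> i (w (p i)))"
  have "wedge n w (\<Phi>(k := \<Psi>)) = \<Psi> (\<lambda>a. \<Sum>p | p permutes {..<n}. ?coef p * w (p k) a)"
    if \<Psi>: "linfun \<Psi>" for \<Psi>
  proof -
    have "(\<Prod>i<n. (\<Phi>(k := \<Psi>)) i (w (p i))) = \<Psi> (w (p k)) * (\<Prod>i\<in>{..<n} - {k}. \<Phi> i (w (p i)))" for p
    proof -
      have "(\<Prod>i<n. (\<Phi>(k := \<Psi>)) i (w (p i)))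
          = \<Psi> (w (p k)) * (\<Prod>i\<in>{..<n} - {k}. (\<Phi>(k := \<Psi>)) i (w (p i)))"
        using assms(1) by (subst prod.remove[of _ k]) simp_all
      also have "(\<Prod>i\<in>{..<n} - {k}. (\<Phi>(k := \<Psi>)) i (w (p i))) = (\<Prod>i\<in>{..<n} - {k}. \<Phi> i (w (p i)))"
        by (rule prod.cong) simp_all
      finally show ?thesis .
    qed
    moreover have "\<forall>i<n. linfun ((\<Phi>(k := \<Psi>)) i)"
      using assms(2) \<Psi> by simp
    ultimately have "wedge n w (\<Phi>(k := \<Psi>)) = (\<Sum>p | p permutes {..<n}. ?coef p * \<Psi> (w (p k)))"
      by (simp add: wedge_def mult_ac)
    also have "\<dots> = \<Psi> (\<lambda>a. \<Sum>p | p permutes {..<n}. ?coef p * w (p k) a)"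
      by (rule linfun_sum[OF \<Psi>, symmetric])
    finally show ?thesis .
  qed
  then show ?thesis
    by (rule that)
qed

lemma ext_pow_linear_in_slot:
  assumes "F \<in> ext_pow n W" "k < n" "\<forall>i<n. i \<noteq> k \<longrightarrow> linfun (\<Phi> i)"
  obtains u where "\<And>\<Psi>. linfun \<Psi> \<Longrightarrow> F (\<Phi>(k := \<Psi>)) = \<Psi> u"
proof -
  obtain K :: nat and c ws where F: "F = (\<lambda>\<Phi>. \<Sum>i<K. c i * wedge n (ws i) \<Phi>)"
    using assms(1) by (rule ext_powE)
  have "\<forall>i. \<exists>u. \<forall>\<Psi>. linfun \<Psi> \<longrightarrow> wedge n (ws i) (\<Phi>(k := \<Psi>)) = \<Psi> u"
    using wedge_linear_in_slot[OF assms(2,3)] by blast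
  from choice[OF this] obtain U
    where U: "\<forall>i \<Psi>. linfun \<Psi> \<longrightarrow> wedge n (ws i) (\<Phi>(k := \<Psi>)) = \<Psi> (U i)"
    by blast
  have "F (\<Phi>(k := \<Psi>)) = \<Psi> (\<lambda>a. \<Sum>i<K. c i * U i a)" if "linfun \<Psi>" for \<Psi>
    using that by (simp add: F U linfun_sum)
  then show ?thesis
    by (rule that)
qed

text \<open>The slots are switched from coordinate functionals to arbitrary linear ones one at a time,
  using linearity in that slot.\<close>

lemma ext_pow_eq_0_on_mixed_tuples:
  assumes F: "F \<in> ext_pow n W" and vanish: "\<And>a. F (eval_at \<circ> a) = 0"
    and "r \<le> n" "\<forall>i<r. linfun (\<Phi> i)"
  shows "F (\<lambda>i. if i < r then \<Phi> i else eval_at (a i)) = 0"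
  using assms(3,4)
proof (induction r arbitrary: a)
  case 0
  have "(\<lambda>i. if i < 0 then \<Phi> i else eval_at (a i)) = eval_at \<circ> a"
    by (rule ext) simp
  then show ?case
    using vanish by (simp only:)
next
  case (Suc r)
  let ?\<Phi> = "\<lambda>i. if i < r then \<Phi> i else eval_at (a i)"
  have r: "r < n"
    using Suc.prems(1) by simp
  have lin: "\<forall>i<n. i \<noteq> r \<longrightarrow> linfun (?\<Phi> i)"
    using Suc.prems by (simp add: linfun_eval_at)
  obtain u where u: "\<And>\<Psi>. linfun \<Psi> \<Longrightarrow> F (?\<Phi>(r := \<Psi>)) = \<Psi> u"
    using ext_pow_linear_in_slot[OF F r lin] by blast
  have "u b = 0" for b
  proof -
    have "?\<Phi>(r := eval_at b) = (\<lambda>i. if i < r then \<Phi> i else eval_at ((a(r := b)) i))"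
      by (rule ext) simp
    then have "F (?\<Phi>(r := eval_at b)) = 0"
      using Suc by simp
    then show ?thesis
      using u[OF linfun_eval_at] by (simp add: eval_at_apply)
  qed
  then have "u = (\<lambda>b. 0)"
    by (simp add: fun_eq_iff)
  moreover have "(\<lambda>i. if i < Suc r then \<Phi> i else eval_at (a i)) = ?\<Phi>(r := \<Phi> r)"
    by (rule ext) simp
  moreover have "linfun (\<Phi> r)"
    using Suc.prems(2) by simp
  ultimately show ?case
    using u linfun_zero by simp
qed

lemma ext_pow_eq_0I:
  assumes F: "F \<in> ext_pow n W" and vanish: "\<And>a. F (eval_at \<circ> a) = 0"
  shows "F = 0"
proof
  fix \<Phi>
  show "F \<Phi> = 0 \<Phi>"
  proof (cases "\<forall>i<n. linfun (\<Phi> i)")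
    case True
    then have "F \<Phi> = F (\<lambda>i. if i < n then \<Phi> i else eval_at undefined)"
      by (intro ext_pow_cong[OF F]) simp
    then show ?thesis
      using ext_pow_eq_0_on_mixed_tuples[OF F vanish order.refl True, of "\<lambda>_. undefined"] by simp
  next
    case False
    then show ?thesis
      using ext_pow_not_linfun[OF F] by simp
  qed
qed

lemma ext_pow_eval_at_vanishes_off_finite:
  assumes "\<And>w. w \<in> W \<Longrightarrow> finite {x. w x \<noteq> 0}" "F \<in> ext_pow n W" "k < n"
  obtains S where "finite S" "\<And>a. a k \<notin> S \<Longrightarrow> F (eval_at \<circ> a) = 0"
proof -
  obtain K :: nat and c ws where ws: "\<forall>i<K. \<forall>j<n. ws i j \<in> W"
    and F: "F = (\<lambda>\<Phi>. \<Sum>i<K. c i * wedge n (ws i) \<Phi>)"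
    using assms(2) by (rule ext_powE)
  let ?S = "\<Union>i<K. \<Union>j<n. {x. ws i j x \<noteq> 0}"
  have "finite ?S"
    using ws assms(1) by auto
  moreover have "F (eval_at \<circ> a) = 0" if a: "a k \<notin> ?S" for a
  proof -
    have "wedge n (ws i) (eval_at \<circ> a) = 0" if "i < K" for i
    proof -
      have zero: "(\<Prod>l<n. ws i (p l) (a l)) = 0" if p: "p permutes {..<n}" for p
      proof (rule prod_zero)
        have "p k < n"
          using permutes_in_image[OF p] assms(3) by simp
        then show "\<exists>l\<in>{..<n}. ws i (p l) (a l) = 0"
          using a \<open>i < K\<close> assms(3) by (intro bexI[of _ k]) auto
      qed simp
      have "wedge n (ws i) (eval_at \<circ> a)
          = (\<Sum>p | p permutes {..<n}. of_int (sign p) * (\<Prod>l<n. ws i (p l) (a l)))"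
        by (simp add: wedge_def linfun_eval_at eval_at_apply)
      also have "\<dots> = 0"
        by (rule sum.neutral) (simp add: zero)
      finally show ?thesis .
    qed
    then show ?thesis
      by (simp add: F)
  qed
  ultimately show ?thesis
    by (rule that)
qed

section \<open>The shift action on the free module\<close>

lemma shiftM_apply [simp]: "shiftM k w x = w (fst x, snd x - k)"
  by (simp add: shiftM_def case_prod_beta)

lemma shiftM_shiftM: "shiftM k \<circ> shiftM l = shiftM (k + l)"
  by (simp add: fun_eq_iff diff_diff_eq)

lemma linmap_shiftM: "linmap (shiftM k)"
  by (simp add: linmap_def fun_eq_iff)

lemma shiftM_Mfree: "shiftM k ` Mfree d \<subseteq> Mfree d"
proof
  fix v
  assume "v \<in> shiftM k ` Mfree d"
  then obtain w where w: "w \<in> Mfree d" "v = shiftM k w"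
    by blast
  have "inj (\<lambda>x::nat \<times> int. (fst x, snd x - k))"
    by (auto simp: inj_def prod_eq_iff)
  then have "finite ((\<lambda>x. (fst x, snd x - k)) -` {x. w x \<noteq> 0})"
    using w(1) by (intro finite_vimageI) (simp_all add: Mfree_def)
  moreover have "(\<lambda>x. (fst x, snd x - k)) -` {x. w x \<noteq> 0} = {x. v x \<noteq> 0}"
    using w(2) by auto
  ultimately have "finite {x. v x \<noteq> 0}"
    by simp
  then show "v \<in> Mfree d"
    using w by (simp add: Mfree_def)
qed

lemma ext_act_shiftM_fixed_eq_0:
  assumes "0 < n" and F: "F \<in> ext_pow n (Mfree d)" and fixed: "ext_act n (shiftM (- 1)) F = F"
  shows "F = 0"
proof (rule ext_pow_eq_0I[OF F])
  have shift: "F (eval_at \<circ> a) = F (eval_at \<circ> (\<lambda>i. (fst (a i), snd (a i) + int t)))" for a t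
  proof (induction t)
    case (Suc t)
    have "F (eval_at \<circ> a) = F (eval_at \<circ> (\<lambda>i. (fst (a i), snd (a i) + int t)))"
      by (rule Suc.IH)
    also have "\<dots> = ext_act n (shiftM (- 1)) F (eval_at \<circ> (\<lambda>i. (fst (a i), snd (a i) + int t)))"
      using fixed by simp
    also have "\<dots> = F (eval_at \<circ> (\<lambda>i. (fst (a i), snd (a i) + int (Suc t))))"
      unfolding ext_act_eval_at by (rule arg_cong[where f = F]) (simp add: fun_eq_iff eval_at_apply ac_simps)
    finally show ?case .
  qed simp
  obtain S where "finite S" and S: "\<And>a. a 0 \<notin> S \<Longrightarrow> F (eval_at \<circ> a) = 0"
    using ext_pow_eval_at_vanishes_off_finite[OF _ F assms(1)] by (auto simp: Mfree_def)
  fix a :: "nat \<Rightarrow> nat \<times> int"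
  define t where "t = nat (Max (snd ` S) + 1 - snd (a 0))"
  have "(fst (a 0), snd (a 0) + int t) \<notin> S"
  proof
    assume "(fst (a 0), snd (a 0) + int t) \<in> S"
    then have "snd (a 0) + int t \<le> Max (snd ` S)"
      using \<open>finite S\<close> by (metis Max_ge finite_imageI image_eqI snd_conv)
    then show False
      unfolding t_def by linarith
  qed
  then show "F (eval_at \<circ> a) = 0"
    using shift[of a t] S by simp
qed

section \<open>The action of (1 + x)^\<alpha> on the completion\<close>

lemma powM_apply: "powM \<beta> w x = (\<Sum>j\<le>snd x. (\<beta> gchoose j) * w (fst x, snd x - j))"
  by (simp add: powM_def case_prod_beta)

lemma powM_powM: "powM \<alpha> \<circ> powM \<beta> = powM (\<alpha> + \<beta>)"
proof (intro ext)
  fix w :: "nat \<times> nat \<Rightarrow> rat" and x :: "nat \<times> nat"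
  obtain i m where x: "x = (i, m)"
    by (cases x)
  define g where "g j l = (\<alpha> gchoose j) * (\<beta> gchoose l) * w (i, m - (j + l))" for j l
  have "(powM \<alpha> \<circ> powM \<beta>) w x = (\<Sum>j\<le>m. \<Sum>l\<le>m - j. g j l)"
    by (simp add: x powM_apply g_def sum_distrib_left mult.assoc diff_diff_eq)
  also have "\<dots> = (\<Sum>(j, l) | j + l \<le> m. g j l)"
    by (subst sum.Sigma) (auto intro: sum.cong)
  also have "\<dots> = (\<Sum>s\<le>m. \<Sum>j\<le>s. g j (s - j))"
    by (rule sum.triangle_reindex_eq)
  also have "\<dots> = (\<Sum>s\<le>m. ((\<alpha> + \<beta>) gchoose s) * w (i, m - s))"
  proof (rule sum.cong)
    fix s
    have "(\<Sum>j\<le>s. g j (s - j)) = (\<Sum>j\<le>s. (\<alpha> gchoose j) * (\<beta> gchoose (s - j))) * w (i, m - s)"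
      by (simp add: g_def sum_distrib_right)
    also have "\<dots> = ((\<alpha> + \<beta>) gchoose s) * w (i, m - s)"
      using gbinomial_Vandermonde[of \<alpha> \<beta> s] by (simp add: atMost_atLeast0)
    finally show "(\<Sum>j\<le>s. g j (s - j)) = ((\<alpha> + \<beta>) gchoose s) * w (i, m - s)" .
  qed simp
  also have "\<dots> = powM (\<alpha> + \<beta>) w x"
    by (simp add: x powM_apply)
  finally show "(powM \<alpha> \<circ> powM \<beta>) w x = powM (\<alpha> + \<beta>) w x" .
qed

lemma linmap_powM: "linmap (powM \<beta>)"
  by (simp add: linmap_def fun_eq_iff powM_apply sum.distrib sum_distrib_left algebra_simps)

lemma powM_Mhat: "powM \<beta> ` Mhat d \<subseteq> Mhat d"
  by (auto simp: Mhat_def powM_apply)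

definition tuple_degree :: "nat \<Rightarrow> (nat \<Rightarrow> 'i \<times> nat) \<Rightarrow> nat" where
  "tuple_degree n a = (\<Sum>i<n. snd (a i))"

definition lower_slot :: "nat \<Rightarrow> nat \<Rightarrow> (nat \<Rightarrow> 'i \<times> nat) \<Rightarrow> nat \<Rightarrow> 'i \<times> nat" where
  "lower_slot k j a = a(k := (fst (a k), snd (a k) - j))"

text \<open>F evaluated after applying (1 + x)^\<beta> in the first r tensor factors only; it interpolates
  between the coefficient F (eval_at \<circ> a) (r = 0) and the action on F (r = n).\<close>

definition powM_first_slots :: "((nat \<Rightarrow> (nat \<times> nat \<Rightarrow> rat) \<Rightarrow> rat) \<Rightarrow> rat)
    \<Rightarrow> rat \<Rightarrow> nat \<Rightarrow> (nat \<Rightarrow> nat \<times> nat) \<Rightarrow> rat" where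
  "powM_first_slots F \<beta> r a = F (\<lambda>k. if k < r then eval_at (a k) \<circ> powM \<beta> else eval_at (a k))"

text \<open>The contribution of the term \<beta>x of (1 + x)^\<beta> in the first r factors, divided by \<beta>,
  to the coefficient at a.\<close>

definition lower_slot_sum :: "((nat \<Rightarrow> ('i \<times> nat \<Rightarrow> rat) \<Rightarrow> rat) \<Rightarrow> rat)
    \<Rightarrow> nat \<Rightarrow> (nat \<Rightarrow> 'i \<times> nat) \<Rightarrow> rat" where
  "lower_slot_sum F r a = (\<Sum>k<r. if snd (a k) = 0 then 0 else F (eval_at \<circ> lower_slot k 1 a))"

lemma lower_slot_0 [simp]: "lower_slot k 0 a = a"
  by (simp add: lower_slot_def)

lemma tuple_degree_lower_slot:
  assumes "k < n" "j \<le> snd (a k)"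
  shows "tuple_degree n (lower_slot k j a) + j = tuple_degree n a"
proof -
  have "(\<Sum>i<n. snd (lower_slot k j a i)) + (\<Sum>i<n. if i = k then j else 0) = (\<Sum>i<n. snd (a i))"
    unfolding sum.distrib[symmetric] using assms(2) by (intro sum.cong) (auto simp: lower_slot_def)
  then show ?thesis
    using assms(1) by (simp add: tuple_degree_def)
qed

lemma sum_atMost_eq_first_two:
  fixes g :: "nat \<Rightarrow> 'a::comm_monoid_add"
  assumes "\<And>j. 2 \<le> j \<Longrightarrow> j \<le> m \<Longrightarrow> g j = 0"
  shows "(\<Sum>j\<le>m. g j) = g 0 + (if m = 0 then 0 else g 1)"
proof (cases "m = 0")
  case False
  have "(\<Sum>j\<le>m. g j) = (\<Sum>j\<le>Suc 0. g j)"
    using assms False by (intro sum.mono_neutral_right) auto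
  then show ?thesis
    using False by simp
qed simp

lemma powM_first_slots_0: "powM_first_slots F \<beta> 0 a = F (eval_at \<circ> a)"
  unfolding powM_first_slots_def by (rule arg_cong[where f = F]) (simp add: fun_eq_iff)

lemma powM_first_slots_all:
  assumes "F \<in> ext_pow n W"
  shows "powM_first_slots F \<beta> n a = ext_act n (powM \<beta>) F (eval_at \<circ> a)"
  unfolding powM_first_slots_def ext_act_eval_at by (rule ext_pow_cong[OF assms]) simp

lemma powM_first_slots_Suc:
  assumes F: "F \<in> ext_pow n W" and "r < n"
  shows "powM_first_slots F \<beta> (Suc r) a
       = (\<Sum>j\<le>snd (a r). (\<beta> gchoose j) * powM_first_slots F \<beta> r (lower_slot r j a))"
proof -
  let ?\<Phi> = "\<lambda>k. if k < r then eval_at (a k) \<circ> powM \<beta> else eval_at (a k)"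
  have lin: "\<forall>i<n. i \<noteq> r \<longrightarrow> linfun (?\<Phi> i)"
    by (simp add: linfun_eval_at linfun_comp_linmap linmap_powM)
  obtain u where u: "\<And>\<Psi>. linfun \<Psi> \<Longrightarrow> F (?\<Phi>(r := \<Psi>)) = \<Psi> u"
    using ext_pow_linear_in_slot[OF F \<open>r < n\<close> lin] by blast
  have "powM_first_slots F \<beta> r (lower_slot r j a) = u (fst (a r), snd (a r) - j)" for j
  proof -
    have "(\<lambda>k. if k < r then eval_at (lower_slot r j a k) \<circ> powM \<beta> else eval_at (lower_slot r j a k))
        = ?\<Phi>(r := eval_at (fst (a r), snd (a r) - j))"
      by (rule ext) (simp add: lower_slot_def)
    then show ?thesis
      unfolding powM_first_slots_def using u[OF linfun_eval_at] by (simp add: eval_at_apply)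
  qed
  moreover have "powM_first_slots F \<beta> (Suc r) a = (eval_at (a r) \<circ> powM \<beta>) u"
  proof -
    have "(\<lambda>k. if k < Suc r then eval_at (a k) \<circ> powM \<beta> else eval_at (a k))
        = ?\<Phi>(r := eval_at (a r) \<circ> powM \<beta>)"
      by (rule ext) simp
    then show ?thesis
      unfolding powM_first_slots_def using u[OF linfun_comp_linmap[OF linfun_eval_at linmap_powM]] by simp
  qed
  ultimately show ?thesis
    by (simp add: powM_apply eval_at_apply)
qed

lemma lower_slot_sum_eq_0:
  assumes low: "\<And>b. tuple_degree n b < D \<Longrightarrow> F (eval_at \<circ> b) = 0"
    and "r \<le> n" "tuple_degree n a \<le> D"
  shows "lower_slot_sum F r a = 0"
  unfolding lower_slot_sum_def
proof (rule sum.neutral, intro ballI)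
  fix k
  assume "k \<in> {..<r}"
  then have "k < n"
    using assms(2) by simp
  show "(if snd (a k) = 0 then 0 else F (eval_at \<circ> lower_slot k 1 a)) = 0"
  proof (cases "snd (a k) = 0")
    case False
    then have "tuple_degree n (lower_slot k 1 a) + 1 = tuple_degree n a"
      using tuple_degree_lower_slot[OF \<open>k < n\<close>, of 1 a] by simp
    then have "F (eval_at \<circ> lower_slot k 1 a) = 0"
      using assms(3) by (intro low) simp
    then show ?thesis
      by simp
  qed simp
qed

lemma powM_first_slots_first_order:
  assumes F: "F \<in> ext_pow n W"
    and low: "\<And>b. tuple_degree n b < D \<Longrightarrow> F (eval_at \<circ> b) = 0"
    and "r \<le> n" "tuple_degree n a \<le> Suc D"
  shows "powM_first_slots F \<beta> r a = F (eval_at \<circ> a) + \<beta> * lower_slot_sum F r a"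
  using assms(3,4)
proof (induction r arbitrary: a)
  case 0
  show ?case
    by (simp only: powM_first_slots_0 lower_slot_sum_def lessThan_0 sum.empty mult_zero_right add_0_right)
next
  case (Suc r)
  have "r < n"
    using Suc.prems(1) by simp
  have deg: "tuple_degree n (lower_slot r j a) + j \<le> Suc D" if "j \<le> snd (a r)" for j
    using tuple_degree_lower_slot[OF \<open>r < n\<close>, of j a] that Suc.prems(2) by simp
  have lowered: "powM_first_slots F \<beta> r (lower_slot r j a) = F (eval_at \<circ> lower_slot r j a)"
    if "1 \<le> j" "j \<le> snd (a r)" for j
  proof -
    have "tuple_degree n (lower_slot r j a) \<le> D"
      using deg[OF that(2)] that(1) by simp
    then show ?thesis
      using Suc.IH[of "lower_slot r j a"] Suc.prems(1) lower_slot_sum_eq_0[where F = F, OF low] by (simp add: comp_def)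
  qed
  have higher: "(\<beta> gchoose j) * powM_first_slots F \<beta> r (lower_slot r j a) = 0"
    if "2 \<le> j" "j \<le> snd (a r)" for j
  proof -
    have "tuple_degree n (lower_slot r j a) < D"
      using deg[OF that(2)] that(1) by simp
    then show ?thesis
      using lowered[of j] that low by simp
  qed
  have IH: "powM_first_slots F \<beta> r a = F (eval_at \<circ> a) + \<beta> * lower_slot_sum F r a"
    using Suc.IH[of a] Suc.prems by (simp add: comp_def)
  have "powM_first_slots F \<beta> (Suc r) a
      = (\<Sum>j\<le>snd (a r). (\<beta> gchoose j) * powM_first_slots F \<beta> r (lower_slot r j a))"
    by (rule powM_first_slots_Suc[OF F \<open>r < n\<close>])
  also have "\<dots> = (\<beta> gchoose 0) * powM_first_slots F \<beta> r (lower_slot r 0 a)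
      + (if snd (a r) = 0 then 0 else (\<beta> gchoose 1) * powM_first_slots F \<beta> r (lower_slot r 1 a))"
    by (rule sum_atMost_eq_first_two) (rule higher)
  also have "\<dots> = powM_first_slots F \<beta> r a
      + (if snd (a r) = 0 then 0 else \<beta> * F (eval_at \<circ> lower_slot r 1 a))"
    using lowered[of 1] by simp
  finally show ?case
    unfolding IH by (cases "snd (a r) = 0") (simp_all add: lower_slot_sum_def distrib_left comp_def)
qed

lemma powM_fixed_first_order:
  assumes F: "F \<in> ext_pow n W" and fixed: "ext_act n (powM \<beta>) F = F" and "\<beta> \<noteq> 0"
    and low: "\<And>b. tuple_degree n b < D \<Longrightarrow> F (eval_at \<circ> b) = 0"
    and "tuple_degree n a \<le> Suc D"
  shows "lower_slot_sum F n a = 0"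
proof -
  have "F (eval_at \<circ> a) + \<beta> * lower_slot_sum F n a = powM_first_slots F \<beta> n a"
    by (rule powM_first_slots_first_order[OF F low order.refl assms(5), symmetric])
  also have "\<dots> = F (eval_at \<circ> a)"
    unfolding powM_first_slots_all[OF F] fixed ..
  finally show ?thesis
    using \<open>\<beta> \<noteq> 0\<close> by simp
qed

lemma ex_min_degree_max_first_slot:
  fixes f :: "(nat \<Rightarrow> 'i \<times> nat) \<Rightarrow> 'b::zero"
  assumes "f a \<noteq> 0" "0 < n"
  obtains a0 where "f a0 \<noteq> 0"
    "\<And>b. tuple_degree n b < tuple_degree n a0 \<Longrightarrow> f b = 0"
    "\<And>b. f b \<noteq> 0 \<Longrightarrow> tuple_degree n b = tuple_degree n a0 \<Longrightarrow> snd (b 0) \<le> snd (a0 0)"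
proof -
  define D where "D = (LEAST D. \<exists>b. f b \<noteq> 0 \<and> tuple_degree n b = D)"
  have ex_D: "\<exists>b. f b \<noteq> 0 \<and> tuple_degree n b = D"
    unfolding D_def by (rule LeastI_ex) (use assms(1) in blast)
  have low: "f b = 0" if "tuple_degree n b < D" for b
  proof (rule ccontr)
    assume "f b \<noteq> 0"
    then have "D \<le> tuple_degree n b"
      unfolding D_def by (intro Least_le) blast
    then show False
      using that by simp
  qed
  define Z where "Z = {snd (b 0) | b. f b \<noteq> 0 \<and> tuple_degree n b = D}"
  have "snd (b 0) \<le> tuple_degree n b" for b :: "nat \<Rightarrow> 'i \<times> nat"
    unfolding tuple_degree_def using assms(2) by (intro member_le_sum) auto
  then have "Z \<subseteq> {..D}"
    unfolding Z_def by force
  then have "finite Z"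
    by (rule finite_subset) simp
  moreover have "Z \<noteq> {}"
    using ex_D unfolding Z_def by blast
  ultimately have "Max Z \<in> Z"
    by (rule Max_in)
  then obtain a0 where a0: "f a0 \<noteq> 0" "tuple_degree n a0 = D" "Max Z = snd (a0 0)"
    unfolding Z_def[of] by (auto simp del: Max_in)
  show ?thesis
  proof (rule that)
    show "f a0 \<noteq> 0"
      by fact
    show "f b = 0" if "tuple_degree n b < tuple_degree n a0" for b
      using low that a0(2) by simp
    show "snd (b 0) \<le> snd (a0 0)" if "f b \<noteq> 0" "tuple_degree n b = tuple_degree n a0" for b
    proof -
      have "snd (b 0) \<in> Z"
        unfolding Z_def using that a0(2) by auto
      then show ?thesis
        using Max_ge[OF \<open>finite Z\<close>] a0(3) by simp
    qed
  qed
qed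

lemma ext_act_powM_fixed_eq_0:
  assumes "0 < n" and F: "F \<in> ext_pow n W" and "\<beta> \<noteq> 0" and fixed: "ext_act n (powM \<beta>) F = F"
  shows "F = 0"
proof (rule ext_pow_eq_0I[OF F], rule ccontr)
  fix a
  assume "F (eval_at \<circ> a) \<noteq> 0"
  then obtain a0 where a0: "F (eval_at \<circ> a0) \<noteq> 0"
    and low: "\<And>b. tuple_degree n b < tuple_degree n a0 \<Longrightarrow> F (eval_at \<circ> b) = 0"
    and max: "\<And>b. F (eval_at \<circ> b) \<noteq> 0 \<Longrightarrow> tuple_degree n b = tuple_degree n a0
                \<Longrightarrow> snd (b 0) \<le> snd (a0 0)"
    using ex_min_degree_max_first_slot[of "\<lambda>b. F (eval_at \<circ> b)" a n] assms(1) by blast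
  define a1 where "a1 = a0(0 := (fst (a0 0), Suc (snd (a0 0))))"
  have lower_a1: "lower_slot 0 1 a1 = a0"
    by (simp add: a1_def lower_slot_def fun_eq_iff)
  have deg_a1: "tuple_degree n a1 = Suc (tuple_degree n a0)"
    using tuple_degree_lower_slot[OF assms(1), of 1 a1] lower_a1 by (simp add: a1_def)
  have other_slots: "F (eval_at \<circ> lower_slot k 1 a1) = 0" if "0 < k" "k < n" "snd (a1 k) \<noteq> 0" for k
  proof (rule ccontr)
    assume "F (eval_at \<circ> lower_slot k 1 a1) \<noteq> 0"
    moreover have "tuple_degree n (lower_slot k 1 a1) = tuple_degree n a0"
      using tuple_degree_lower_slot[OF \<open>k < n\<close>, of 1 a1] deg_a1 that(3) by simp
    ultimately have "snd (lower_slot k 1 a1 0) \<le> snd (a0 0)"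
      by (rule max)
    then show False
      using that(1) by (simp add: lower_slot_def a1_def)
  qed
  have rest: "(\<Sum>k\<in>{..<n} - {0}. if snd (a1 k) = 0 then 0 else F (eval_at \<circ> lower_slot k 1 a1)) = 0"
  proof (rule sum.neutral, intro ballI)
    fix k
    assume "k \<in> {..<n} - {0}"
    then show "(if snd (a1 k) = 0 then 0 else F (eval_at \<circ> lower_slot k 1 a1)) = 0"
      using other_slots[of k] by simp
  qed
  have "lower_slot_sum F n a1
      = (if snd (a1 0) = 0 then 0 else F (eval_at \<circ> lower_slot 0 1 a1))
        + (\<Sum>k\<in>{..<n} - {0}. if snd (a1 k) = 0 then 0 else F (eval_at \<circ> lower_slot k 1 a1))"
    unfolding lower_slot_sum_def by (rule sum.remove) (use assms(1) in auto)
  also have "\<dots> = F (eval_at \<circ> a0)"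
    unfolding rest lower_a1 by (simp add: a1_def)
  finally have "lower_slot_sum F n a1 = F (eval_at \<circ> a0)" .
  moreover have "lower_slot_sum F n a1 = 0"
    using powM_fixed_first_order[OF F fixed \<open>\<beta> \<noteq> 0\<close> low] deg_a1 by simp
  ultimately show False
    using a0 by simp
qed

theorem lemma6p1:
  fixes d n :: nat
  assumes "1 \<le> n"
  shows "H1_vanishes (\<lambda>k::int. ext_act n (shiftM k)) (ext_pow n (Mfree d))
       \<and> H1_vanishes (\<lambda>\<alpha>::rat. ext_act n (powM \<alpha>)) (ext_pow n (Mhat d))"
proof
  have "0 < n"
    using assms by simp
  have "module_action (\<lambda>k::int. ext_act n (shiftM k)) (ext_pow n (Mfree d))"
    by (rule module_action_ext_act) (simp_all add: linmap_shiftM shiftM_Mfree shiftM_shiftM)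
  then show "H1_vanishes (\<lambda>k::int. ext_act n (shiftM k)) (ext_pow n (Mfree d))"
    by (rule H1_vanishes_int_action) (auto intro: ext_act_shiftM_fixed_eq_0[OF \<open>0 < n\<close>])
  have "module_action (\<lambda>\<alpha>::rat. ext_act n (powM \<alpha>)) (ext_pow n (Mhat d))"
    by (rule module_action_ext_act) (simp_all add: linmap_powM powM_Mhat powM_powM)
  then show "H1_vanishes (\<lambda>\<alpha>::rat. ext_act n (powM \<alpha>)) (ext_pow n (Mhat d))"
    by (rule H1_vanishes_rat_action) (auto intro: ext_act_powM_fixed_eq_0[OF \<open>0 < n\<close>])
qed

end
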